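(* Let $B$, $C$, $\phi$, $\psi$ and the skew brace $A=(B\times C,\cdot,\circ)$ be as in the construction below. Then $A$ is meta-trivial if and only if \[ \psi_{\phi_{c_1}(b_1)b_1^{-1}}\big(\psi_{b_2}(c_2)c_2^{-1}\big) = \psi_{b_2}(c_2)c_2^{-1} \] for all $b_1,b_2\in B$ and $c_1,c_2\in C$.
   Context: Construction: $B$, $C$ are groups with $C$ abelian; $\phi: C\to\mathrm{Aut}(B)$, $c\mapsto\phi_c$, and $\psi: B\to\mathrm{Aut}(C)$, $b\mapsto\psi_b$, are homomorphisms with $\phi_{\psi_b(c)}=\phi_c$ for all $b\in B,c\in C$. The set $A=B\times C$ carries the operations $(b_1,c_1)\cdot(b_2,c_2) = (b_1\phi_{c_1}(b_2), c_1c_2)$ and $(b_1,c_1)\circ(b_2,c_2) = (b_1b_2, c_1\psi_{b_1}(c_2))$, which make it a skew brace (a set with two group operations satisfying $a\circ(b\cdot c)=(a\circ b)\cdot a^{-1}\cdot(a\circ c)$, $a^{-1}$ the inverse in $(A,\cdot)$). Define $a*b = a^{-1}\cdot(a\circ b)\cdot b^{-1}$ and let $A'$ be the subgroup of $(A,\cdot)$ generated by all $a*b$, $a,b\in A$. $A$ is meta-trivial if $A'$ is a trivial skew brace, i.e. $x\circ y = x\cdot y$ for all $x,y\in A'$. *)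

theory Defs
  imports "HOL-Algebra.Algebra"
begin

definition aut_action :: "('c, 'm) monoid_scheme \<Rightarrow> ('b, 'n) monoid_scheme \<Rightarrow> ('c \<Rightarrow> 'b \<Rightarrow> 'b) \<Rightarrow> bool" where
  "aut_action C B phi \<longleftrightarrow>
     (\<forall>c\<in>carrier C. phi c \<in> iso B B) \<and>
     (\<forall>c1\<in>carrier C. \<forall>c2\<in>carrier C. \<forall>b\<in>carrier B.
        phi (c1 \<otimes>\<^bsub>C\<^esub> c2) b = phi c1 (phi c2 b))"

definition dot_grp :: "('b, 'm) monoid_scheme \<Rightarrow> ('c, 'n) monoid_scheme \<Rightarrow> ('c \<Rightarrow> 'b \<Rightarrow> 'b) \<Rightarrow> ('b \<times> 'c) monoid" where
  "dot_grp B C phi = \<lparr> carrier = carrier B \<times> carrier C,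
      Group.monoid.mult = (\<lambda>(b1, c1) (b2, c2). (b1 \<otimes>\<^bsub>B\<^esub> phi c1 b2, c1 \<otimes>\<^bsub>C\<^esub> c2)),
      one = (\<one>\<^bsub>B\<^esub>, \<one>\<^bsub>C\<^esub>) \<rparr>"

definition circ_grp :: "('b, 'm) monoid_scheme \<Rightarrow> ('c, 'n) monoid_scheme \<Rightarrow> ('b \<Rightarrow> 'c \<Rightarrow> 'c) \<Rightarrow> ('b \<times> 'c) monoid" where
  "circ_grp B C psi = \<lparr> carrier = carrier B \<times> carrier C,
      Group.monoid.mult = (\<lambda>(b1, c1) (b2, c2). (b1 \<otimes>\<^bsub>B\<^esub> b2, c1 \<otimes>\<^bsub>C\<^esub> psi b1 c2)),
      one = (\<one>\<^bsub>B\<^esub>, \<one>\<^bsub>C\<^esub>) \<rparr>"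

definition brace_star :: "('b, 'm) monoid_scheme \<Rightarrow> ('c, 'n) monoid_scheme \<Rightarrow> ('c \<Rightarrow> 'b \<Rightarrow> 'b) \<Rightarrow> ('b \<Rightarrow> 'c \<Rightarrow> 'c)
    \<Rightarrow> 'b \<times> 'c \<Rightarrow> 'b \<times> 'c \<Rightarrow> 'b \<times> 'c" where
  "brace_star B C phi psi a b =
     inv\<^bsub>dot_grp B C phi\<^esub> a \<otimes>\<^bsub>dot_grp B C phi\<^esub> (a \<otimes>\<^bsub>circ_grp B C psi\<^esub> b)
       \<otimes>\<^bsub>dot_grp B C phi\<^esub> inv\<^bsub>dot_grp B C phi\<^esub> b"

definition brace_commutator :: "('b, 'm) monoid_scheme \<Rightarrow> ('c, 'n) monoid_scheme \<Rightarrow> ('c \<Rightarrow> 'b \<Rightarrow> 'b) \<Rightarrow> ('b \<Rightarrow> 'c \<Rightarrow> 'c)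
    \<Rightarrow> ('b \<times> 'c) set" where
  "brace_commutator B C phi psi =
     generate (dot_grp B C phi)
       {brace_star B C phi psi a b | a b. a \<in> carrier B \<times> carrier C \<and> b \<in> carrier B \<times> carrier C}"

text \<open>Meta-trivial: A' is a trivial skew brace, i.e. x \<circ> y = x \<cdot> y on A'.\<close>
definition meta_trivial :: "('b, 'm) monoid_scheme \<Rightarrow> ('c, 'n) monoid_scheme \<Rightarrow> ('c \<Rightarrow> 'b \<Rightarrow> 'b) \<Rightarrow> ('b \<Rightarrow> 'c \<Rightarrow> 'c) \<Rightarrow> bool" where
  "meta_trivial B C phi psi \<longleftrightarrow>
     (\<forall>x\<in>brace_commutator B C phi psi. \<forall>y\<in>brace_commutator B C phi psi.
        x \<otimes>\<^bsub>circ_grp B C psi\<^esub> y = x \<otimes>\<^bsub>dot_grp B C phi\<^esub> y)"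

end

theory Submission
  imports Defs
begin

text \<open>
  Computing in the semidirect product gives
  \<open>(b\<^sub>1, c\<^sub>1) * (b\<^sub>2, c\<^sub>2) = (\<phi>\<^bsub>c\<^sub>1\<^sup>-\<^sup>1\<^esub>(b\<^sub>2) b\<^sub>2\<^sup>-\<^sup>1, \<psi>\<^bsub>b\<^sub>1\<^esub>(c\<^sub>2) c\<^sub>2\<^sup>-\<^sup>1)\<close>,
  using \<open>\<phi>\<^bsub>\<psi>\<^bsub>b\<^esub>(c)\<^esub> = \<phi>\<^sub>c\<close>. In particular \<open>A'\<close> contains the elements \<open>(x, 1)\<close> and \<open>(1, y)\<close>
  for every \<open>\<phi>\<close>-displacement \<open>x = \<phi>\<^sub>c(b) b\<^sup>-\<^sup>1\<close> and \<open>\<psi>\<close>-displacement \<open>y = \<psi>\<^sub>b(c) c\<^sup>-\<^sup>1\<close>,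
  and comparing \<open>(x, 1) \<circ> (1, y) = (x, \<psi>\<^sub>x(y))\<close> with \<open>(x, 1) \<cdot> (1, y) = (x, y)\<close> gives necessity.
  Conversely, let \<open>Z\<close> be the set of elements of \<open>C\<close> fixed by all \<open>\<psi>\<^sub>x\<close> with \<open>x\<close> a
  \<open>\<phi>\<close>-displacement, \<open>W\<close> the pointwise stabiliser of \<open>Z\<close> in \<open>B\<close> and \<open>K\<close> the kernel of \<open>\<phi>\<close>.
  Then \<open>W \<times> (Z \<inter> K)\<close> is a subgroup of \<open>(A, \<cdot>)\<close> on which \<open>\<circ>\<close> and \<open>\<cdot>\<close> agree, and under the
  hypothesis it contains every \<open>a * b\<close>, hence \<open>A'\<close>.
\<close>

locale aut_group_action = G: group G + H: group H
  for G :: "('g, 'm) monoid_scheme" and H :: "('h, 'n) monoid_scheme" +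
  fixes act :: "'g \<Rightarrow> 'h \<Rightarrow> 'h"
  assumes aut_action: "aut_action G H act"
begin

lemma act_hom: "g \<in> carrier G \<Longrightarrow> act g \<in> hom H H"
  using aut_action unfolding aut_action_def iso_def by auto

lemma act_closed [simp]: "g \<in> carrier G \<Longrightarrow> h \<in> carrier H \<Longrightarrow> act g h \<in> carrier H"
  by (rule hom_in_carrier[OF act_hom])

lemma act_mult: "g \<in> carrier G \<Longrightarrow> x \<in> carrier H \<Longrightarrow> y \<in> carrier H \<Longrightarrow>
    act g (x \<otimes>\<^bsub>H\<^esub> y) = act g x \<otimes>\<^bsub>H\<^esub> act g y"
  by (rule hom_mult[OF act_hom])

lemma act_one [simp]: "g \<in> carrier G \<Longrightarrow> act g \<one>\<^bsub>H\<^esub> = \<one>\<^bsub>H\<^esub>"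
  by (rule hom_one[OF act_hom H.group_axioms H.group_axioms])

lemma act_inv: "g \<in> carrier G \<Longrightarrow> h \<in> carrier H \<Longrightarrow> act g (inv\<^bsub>H\<^esub> h) = inv\<^bsub>H\<^esub> act g h"
  by (rule group_hom.hom_inv) (simp_all add: group_hom_def group_hom_axioms_def act_hom H.group_axioms)

lemma act_compose: "g \<in> carrier G \<Longrightarrow> g' \<in> carrier G \<Longrightarrow> h \<in> carrier H \<Longrightarrow>
    act (g \<otimes>\<^bsub>G\<^esub> g') h = act g (act g' h)"
  using aut_action unfolding aut_action_def by auto

lemma act_unit [simp]: "h \<in> carrier H \<Longrightarrow> act \<one>\<^bsub>G\<^esub> h = h"
proof -
  assume h: "h \<in> carrier H"
  have "inj_on (act \<one>\<^bsub>G\<^esub>) (carrier H)"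
    using aut_action unfolding aut_action_def iso_def bij_betw_def by auto
  moreover have "act \<one>\<^bsub>G\<^esub> (act \<one>\<^bsub>G\<^esub> h) = act \<one>\<^bsub>G\<^esub> h"
    using act_compose[of "\<one>\<^bsub>G\<^esub>" "\<one>\<^bsub>G\<^esub>" h] h by simp
  ultimately show ?thesis using h by (simp add: inj_on_def)
qed

lemma act_inv_act [simp]: "g \<in> carrier G \<Longrightarrow> h \<in> carrier H \<Longrightarrow> act (inv\<^bsub>G\<^esub> g) (act g h) = h"
  by (metis act_compose G.inv_closed G.l_inv act_unit)

lemma act_act_inv [simp]: "g \<in> carrier G \<Longrightarrow> h \<in> carrier H \<Longrightarrow> act g (act (inv\<^bsub>G\<^esub> g) h) = h"
  by (metis act_compose G.inv_closed G.r_inv act_unit)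

lemma pointwise_stabilizer_subgroup:
  assumes "Y \<subseteq> carrier H"
  shows "subgroup {g \<in> carrier G. \<forall>h\<in>Y. act g h = h} G"
proof (rule G.subgroupI)
  have "\<one>\<^bsub>G\<^esub> \<in> {g \<in> carrier G. \<forall>h\<in>Y. act g h = h}"
    using assms by auto
  then show "{g \<in> carrier G. \<forall>h\<in>Y. act g h = h} \<noteq> {}" by blast
next
  fix g assume "g \<in> {g \<in> carrier G. \<forall>h\<in>Y. act g h = h}"
  then show "inv\<^bsub>G\<^esub> g \<in> {g \<in> carrier G. \<forall>h\<in>Y. act g h = h}"
    using assms by (auto dest: act_inv_act)
qed (use assms in \<open>auto simp: act_compose\<close>)

lemma fixed_points_subgroup:
  assumes "S \<subseteq> carrier G"
  shows "subgroup {h \<in> carrier H. \<forall>g\<in>S. act g h = h} H"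
proof (rule H.subgroupI)
  have "\<one>\<^bsub>H\<^esub> \<in> {h \<in> carrier H. \<forall>g\<in>S. act g h = h}"
    using assms by auto
  then show "{h \<in> carrier H. \<forall>g\<in>S. act g h = h} \<noteq> {}" by blast
qed (use assms in \<open>auto simp: act_mult act_inv subset_iff\<close>)

end

lemma dot_grp_mult [simp]:
  "(b1, c1) \<otimes>\<^bsub>dot_grp B C phi\<^esub> (b2, c2) = (b1 \<otimes>\<^bsub>B\<^esub> phi c1 b2, c1 \<otimes>\<^bsub>C\<^esub> c2)"
  by (simp add: dot_grp_def)

lemma circ_grp_mult [simp]:
  "(b1, c1) \<otimes>\<^bsub>circ_grp B C psi\<^esub> (b2, c2) = (b1 \<otimes>\<^bsub>B\<^esub> b2, c1 \<otimes>\<^bsub>C\<^esub> psi b1 c2)"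
  by (simp add: circ_grp_def)

lemma dot_grp_carrier [simp]: "carrier (dot_grp B C phi) = carrier B \<times> carrier C"
  by (simp add: dot_grp_def)

lemma dot_grp_one [simp]: "\<one>\<^bsub>dot_grp B C phi\<^esub> = (\<one>\<^bsub>B\<^esub>, \<one>\<^bsub>C\<^esub>)"
  by (simp add: dot_grp_def)

context aut_group_action
begin

lemma group_dot_grp: "group (dot_grp H G act)"
proof (rule groupI)
  fix x y z assume "x \<in> carrier (dot_grp H G act)" "y \<in> carrier (dot_grp H G act)"
    "z \<in> carrier (dot_grp H G act)"
  then show "x \<otimes>\<^bsub>dot_grp H G act\<^esub> y \<otimes>\<^bsub>dot_grp H G act\<^esub> z
      = x \<otimes>\<^bsub>dot_grp H G act\<^esub> (y \<otimes>\<^bsub>dot_grp H G act\<^esub> z)"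
    by (auto simp: act_mult act_compose H.m_assoc G.m_assoc)
next
  fix x assume "x \<in> carrier (dot_grp H G act)"
  then obtain h g where x: "x = (h, g)" "h \<in> carrier H" "g \<in> carrier G" by auto
  have "act (inv\<^bsub>G\<^esub> g) (inv\<^bsub>H\<^esub> h) \<otimes>\<^bsub>H\<^esub> act (inv\<^bsub>G\<^esub> g) h = \<one>\<^bsub>H\<^esub>"
    using x by (simp add: act_mult[symmetric])
  then show "\<exists>y\<in>carrier (dot_grp H G act). y \<otimes>\<^bsub>dot_grp H G act\<^esub> x = \<one>\<^bsub>dot_grp H G act\<^esub>"
    using x by (intro bexI[of _ "(act (inv\<^bsub>G\<^esub> g) (inv\<^bsub>H\<^esub> h), inv\<^bsub>G\<^esub> g)"]) auto
qed auto

lemma dot_grp_inv: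
  assumes "h \<in> carrier H" "g \<in> carrier G"
  shows "inv\<^bsub>dot_grp H G act\<^esub> (h, g) = (act (inv\<^bsub>G\<^esub> g) (inv\<^bsub>H\<^esub> h), inv\<^bsub>G\<^esub> g)"
proof (rule group.inv_equality[OF group_dot_grp])
  show "(act (inv\<^bsub>G\<^esub> g) (inv\<^bsub>H\<^esub> h), inv\<^bsub>G\<^esub> g) \<otimes>\<^bsub>dot_grp H G act\<^esub> (h, g) = \<one>\<^bsub>dot_grp H G act\<^esub>"
    using assms by (simp add: act_mult[symmetric])
qed (use assms in auto)

lemma dot_grp_subgroup_Times:
  assumes W: "subgroup W H" and V: "subgroup V G"
    and trivial: "\<And>g h. g \<in> V \<Longrightarrow> h \<in> carrier H \<Longrightarrow> act g h = h"
  shows "subgroup (W \<times> V) (dot_grp H G act)"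
proof (rule group.subgroupI[OF group_dot_grp])
  fix x assume "x \<in> W \<times> V"
  then obtain h g where x: "x = (h, g)" "h \<in> W" "g \<in> V" by auto
  then have "h \<in> carrier H" "g \<in> carrier G"
    using subgroup.subset[OF W] subgroup.subset[OF V] by auto
  then show "inv\<^bsub>dot_grp H G act\<^esub> x \<in> W \<times> V"
    using x trivial W V by (simp add: dot_grp_inv subgroup.m_inv_closed subgroup.subset)
next
  show "W \<times> V \<noteq> {}"
    using subgroup.one_closed[OF W] subgroup.one_closed[OF V] by blast
next
  fix x y assume "x \<in> W \<times> V" "y \<in> W \<times> V"
  then obtain h g h' g' where "x = (h, g)" "y = (h', g')" "h \<in> W" "g \<in> V" "h' \<in> W" "g' \<in> V"
    by auto
  moreover have "act g h' = h'"
    using calculation trivial subgroup.mem_carrier[OF W] by blast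
  ultimately show "x \<otimes>\<^bsub>dot_grp H G act\<^esub> y \<in> W \<times> V"
    using W V by (simp add: subgroup.m_closed)
qed (use W V in \<open>auto dest: subgroup.mem_carrier\<close>)

end

locale matched_actions =
  B: group B + C: group C + phi: aut_group_action C B phi + psi: aut_group_action B C psi
  for B :: "('b, 'm) monoid_scheme" and C :: "('c, 'n) monoid_scheme"
    and phi :: "'c \<Rightarrow> 'b \<Rightarrow> 'b" and psi :: "'b \<Rightarrow> 'c \<Rightarrow> 'c" +
  assumes phi_psi: "\<And>b c x. b \<in> carrier B \<Longrightarrow> c \<in> carrier C \<Longrightarrow> x \<in> carrier B \<Longrightarrow>
    phi (psi b c) x = phi c x"
begin

lemma brace_star_eq:
  assumes "b1 \<in> carrier B" "c1 \<in> carrier C" "b2 \<in> carrier B" "c2 \<in> carrier C"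
  shows "brace_star B C phi psi (b1, c1) (b2, c2) =
    (phi (inv\<^bsub>C\<^esub> c1) b2 \<otimes>\<^bsub>B\<^esub> inv\<^bsub>B\<^esub> b2, psi b1 c2 \<otimes>\<^bsub>C\<^esub> inv\<^bsub>C\<^esub> c2)"
proof -
  have "inv\<^bsub>dot_grp B C phi\<^esub> (b1, c1) \<otimes>\<^bsub>dot_grp B C phi\<^esub> ((b1, c1) \<otimes>\<^bsub>circ_grp B C psi\<^esub> (b2, c2))
      = (phi (inv\<^bsub>C\<^esub> c1) b2, psi b1 c2)"
    using assms by (simp add: phi.dot_grp_inv phi.act_mult[symmetric] B.m_assoc[symmetric] C.m_assoc[symmetric])
  moreover have "phi (psi b1 c2) (phi (inv\<^bsub>C\<^esub> c2) (inv\<^bsub>B\<^esub> b2)) = inv\<^bsub>B\<^esub> b2"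
    using assms by (simp add: phi_psi)
  ultimately show ?thesis
    using assms by (simp add: brace_star_def phi.dot_grp_inv)
qed


lemma brace_star_in_brace_commutator:
  "a \<in> carrier B \<times> carrier C \<Longrightarrow> a' \<in> carrier B \<times> carrier C \<Longrightarrow>
    brace_star B C phi psi a a' \<in> brace_commutator B C phi psi"
  unfolding brace_commutator_def by (blast intro: generate.incl)

lemma meta_trivial_imp_psi_fixes:
  assumes "meta_trivial B C phi psi"
    and "b1 \<in> carrier B" "b2 \<in> carrier B" "c1 \<in> carrier C" "c2 \<in> carrier C"
  shows "psi (phi c1 b1 \<otimes>\<^bsub>B\<^esub> inv\<^bsub>B\<^esub> b1) (psi b2 c2 \<otimes>\<^bsub>C\<^esub> inv\<^bsub>C\<^esub> c2)
    = psi b2 c2 \<otimes>\<^bsub>C\<^esub> inv\<^bsub>C\<^esub> c2"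
proof -
  let ?x = "phi c1 b1 \<otimes>\<^bsub>B\<^esub> inv\<^bsub>B\<^esub> b1" and ?y = "psi b2 c2 \<otimes>\<^bsub>C\<^esub> inv\<^bsub>C\<^esub> c2"
  have "(?x, \<one>\<^bsub>C\<^esub>) = brace_star B C phi psi (\<one>\<^bsub>B\<^esub>, inv\<^bsub>C\<^esub> c1) (b1, \<one>\<^bsub>C\<^esub>)"
    and "(\<one>\<^bsub>B\<^esub>, ?y) = brace_star B C phi psi (b2, \<one>\<^bsub>C\<^esub>) (\<one>\<^bsub>B\<^esub>, c2)"
    using assms by (simp_all add: brace_star_eq)
  then have "(?x, \<one>\<^bsub>C\<^esub>) \<in> brace_commutator B C phi psi" "(\<one>\<^bsub>B\<^esub>, ?y) \<in> brace_commutator B C phi psi"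
    using assms by (simp_all add: brace_star_in_brace_commutator)
  then have "(?x, \<one>\<^bsub>C\<^esub>) \<otimes>\<^bsub>circ_grp B C psi\<^esub> (\<one>\<^bsub>B\<^esub>, ?y)
      = (?x, \<one>\<^bsub>C\<^esub>) \<otimes>\<^bsub>dot_grp B C phi\<^esub> (\<one>\<^bsub>B\<^esub>, ?y)"
    using assms(1) unfolding meta_trivial_def by blast
  then show ?thesis
    using assms by simp
qed

lemma meta_trivial_if_trivial_subgroup:
  assumes S: "subgroup S (dot_grp B C phi)"
    and stars: "\<And>a a'. a \<in> carrier B \<times> carrier C \<Longrightarrow> a' \<in> carrier B \<times> carrier C \<Longrightarrow>
      brace_star B C phi psi a a' \<in> S"
    and trivial: "\<And>x y. x \<in> S \<Longrightarrow> y \<in> S \<Longrightarrow>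
      x \<otimes>\<^bsub>circ_grp B C psi\<^esub> y = x \<otimes>\<^bsub>dot_grp B C phi\<^esub> y"
  shows "meta_trivial B C phi psi"
proof -
  have "brace_commutator B C phi psi \<subseteq> S"
    unfolding brace_commutator_def
    by (rule group.generate_subgroup_incl[OF phi.group_dot_grp _ S]) (use stars in blast)
  then show ?thesis
    unfolding meta_trivial_def using trivial by blast
qed

lemma psi_fixes_imp_meta_trivial:
  assumes displacements_fixed: "\<And>b1 b2 c1 c2. b1 \<in> carrier B \<Longrightarrow> b2 \<in> carrier B \<Longrightarrow> c1 \<in> carrier C \<Longrightarrow>
    c2 \<in> carrier C \<Longrightarrow> psi (phi c1 b1 \<otimes>\<^bsub>B\<^esub> inv\<^bsub>B\<^esub> b1) (psi b2 c2 \<otimes>\<^bsub>C\<^esub> inv\<^bsub>C\<^esub> c2)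
      = psi b2 c2 \<otimes>\<^bsub>C\<^esub> inv\<^bsub>C\<^esub> c2"
  shows "meta_trivial B C phi psi"
proof -
  define Disp where "Disp = {phi c b \<otimes>\<^bsub>B\<^esub> inv\<^bsub>B\<^esub> b | c b. c \<in> carrier C \<and> b \<in> carrier B}"
  define Z where "Z = {c \<in> carrier C. \<forall>x\<in>Disp. psi x c = c}"
  define W where "W = {b \<in> carrier B. \<forall>c\<in>Z. psi b c = c}"
  define K where "K = {c \<in> carrier C. \<forall>b\<in>carrier B. phi c b = b}"
  have "subgroup W B"
    unfolding W_def by (rule psi.pointwise_stabilizer_subgroup) (auto simp: Z_def)
  moreover have "subgroup Z C"
    unfolding Z_def by (rule psi.fixed_points_subgroup) (auto simp: Disp_def)
  moreover have "subgroup K C"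
    unfolding K_def by (rule phi.pointwise_stabilizer_subgroup) simp
  ultimately have "subgroup (W \<times> (Z \<inter> K)) (dot_grp B C phi)"
    by (intro phi.dot_grp_subgroup_Times C.subgroups_Inter_pair) (auto simp: K_def)
  moreover have "brace_star B C phi psi a a' \<in> W \<times> (Z \<inter> K)"
    if carrier: "a \<in> carrier B \<times> carrier C" "a' \<in> carrier B \<times> carrier C" for a a'
  proof -
    obtain b1 c1 b2 c2 where a: "a = (b1, c1)" "a' = (b2, c2)"
      and m: "b1 \<in> carrier B" "c1 \<in> carrier C" "b2 \<in> carrier B" "c2 \<in> carrier C"
      using carrier by auto
    have "phi (inv\<^bsub>C\<^esub> c1) b2 \<otimes>\<^bsub>B\<^esub> inv\<^bsub>B\<^esub> b2 \<in> Disp"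
      using m unfolding Disp_def by blast
    moreover have "Disp \<subseteq> W"
      unfolding W_def Z_def Disp_def by auto
    ultimately have "phi (inv\<^bsub>C\<^esub> c1) b2 \<otimes>\<^bsub>B\<^esub> inv\<^bsub>B\<^esub> b2 \<in> W"
      by blast
    moreover have "psi b1 c2 \<otimes>\<^bsub>C\<^esub> inv\<^bsub>C\<^esub> c2 \<in> Z"
      using m displacements_fixed unfolding Z_def Disp_def by auto
    moreover have "psi b1 c2 \<otimes>\<^bsub>C\<^esub> inv\<^bsub>C\<^esub> c2 \<in> K"
      using m unfolding K_def by (simp add: phi.act_compose phi_psi)
    ultimately show ?thesis
      using a m by (simp add: brace_star_eq)
  qed
  moreover have "x \<otimes>\<^bsub>circ_grp B C psi\<^esub> y = x \<otimes>\<^bsub>dot_grp B C phi\<^esub> y"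
    if "x \<in> W \<times> (Z \<inter> K)" "y \<in> W \<times> (Z \<inter> K)" for x y
    using that unfolding W_def K_def by auto
  ultimately show ?thesis
    by (rule meta_trivial_if_trivial_subgroup)
qed

end

theorem proposition8p4:
  fixes B :: "('b, 'm) monoid_scheme" and C :: "('c, 'n) monoid_scheme"
    and phi :: "'c \<Rightarrow> 'b \<Rightarrow> 'b" and psi :: "'b \<Rightarrow> 'c \<Rightarrow> 'c"
  assumes "group B" and "comm_group C"
    and "aut_action C B phi" and "aut_action B C psi"
    and "\<And>b c x. b \<in> carrier B \<Longrightarrow> c \<in> carrier C \<Longrightarrow> x \<in> carrier B \<Longrightarrow> phi (psi b c) x = phi c x"
  shows "meta_trivial B C phi psi \<longleftrightarrow>
    (\<forall>b1\<in>carrier B. \<forall>b2\<in>carrier B. \<forall>c1\<in>carrier C. \<forall>c2\<in>carrier C.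
       psi (phi c1 b1 \<otimes>\<^bsub>B\<^esub> inv\<^bsub>B\<^esub> b1) (psi b2 c2 \<otimes>\<^bsub>C\<^esub> inv\<^bsub>C\<^esub> c2)
         = psi b2 c2 \<otimes>\<^bsub>C\<^esub> inv\<^bsub>C\<^esub> c2)"
proof -
  interpret matched_actions B C phi psi
    using assms by (simp add: matched_actions_def matched_actions_axioms_def aut_group_action_def
        aut_group_action_axioms_def comm_group.axioms(2))
  show ?thesis
    using meta_trivial_imp_psi_fixes psi_fixes_imp_meta_trivial by blast
qed

end
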